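(* The conditional operation is not smooth in the variety of conditional algebras: there exist a conditional algebra $\langle A,\to\rangle$ and sets $U,V\subseteq\mathrm{Ul}(A)$ such that $U\to^{\sigma}V\neq U\to^{\pi}V$.
   Context: A conditional algebra is a pair $\langle A,\to\rangle$ where $A$ is a Boolean algebra and $\to$ is a binary operation on $A$ such that for all $a,b,c$: $a\to 1=1$; $(a\to b)\wedge(a\to c)=a\to(b\wedge c)$; $(a\vee b)\to c\le (a\to c)\wedge(b\to c)$. $\mathrm{Ul}(A)$ carries the Stone topology with basic clopens $\varphi(a)=\{u:a\in u\}$. For $U,V\subseteq\mathrm{Ul}(A)$: the $\pi$-extension is $U\to^{\pi}V=\bigcap_{(Y,O)}\bigcup\{\varphi(a\to b): Y\subseteq\varphi(a),\ \varphi(b)\subseteq O\}$ over closed $Y\subseteq U$ and open $O\supseteq V$; the $\sigma$-extension is $U\to^{\sigma}V=\bigcup_{(O,Y)}\bigcap\{\varphi(a\to b): \varphi(a)\subseteq O,\ Y\subseteq\varphi(b)\}$ over open $O\supseteq U$ and closed $Y\subseteq V$. The operation is smooth if these always coincide. *)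

theory Defs
  imports Main
begin

record 'a balg =
  carrier :: "'a set"
  meet :: "'a \<Rightarrow> 'a \<Rightarrow> 'a"
  join :: "'a \<Rightarrow> 'a \<Rightarrow> 'a"
  cmpl :: "'a \<Rightarrow> 'a"
  bot :: 'a
  top :: 'a

definition boolean_algebra :: "'a balg \<Rightarrow> bool" where
  "boolean_algebra B \<longleftrightarrow>
     bot B \<in> carrier B \<and> top B \<in> carrier B \<and>
     (\<forall>a\<in>carrier B. cmpl B a \<in> carrier B) \<and>
     (\<forall>a\<in>carrier B. \<forall>b\<in>carrier B. meet B a b \<in> carrier B \<and> join B a b \<in> carrier B) \<and>
     (\<forall>a\<in>carrier B. \<forall>b\<in>carrier B.
        meet B a b = meet B b a \<and> join B a b = join B b a \<and>
        meet B a (join B a b) = a \<and> join B a (meet B a b) = a) \<and>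
     (\<forall>a\<in>carrier B. \<forall>b\<in>carrier B. \<forall>c\<in>carrier B.
        meet B a (meet B b c) = meet B (meet B a b) c \<and>
        join B a (join B b c) = join B (join B a b) c \<and>
        meet B a (join B b c) = join B (meet B a b) (meet B a c)) \<and>
     (\<forall>a\<in>carrier B. meet B a (cmpl B a) = bot B \<and> join B a (cmpl B a) = top B \<and>
        join B a (bot B) = a \<and> meet B a (top B) = a)"

definition ble :: "'a balg \<Rightarrow> 'a \<Rightarrow> 'a \<Rightarrow> bool" where
  "ble B a b \<longleftrightarrow> meet B a b = a"

definition conditional_algebra :: "'a balg \<Rightarrow> ('a \<Rightarrow> 'a \<Rightarrow> 'a) \<Rightarrow> bool" where
  "conditional_algebra B imp \<longleftrightarrow>
     boolean_algebra B \<and>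
     (\<forall>a\<in>carrier B. \<forall>b\<in>carrier B. imp a b \<in> carrier B) \<and>
     (\<forall>a\<in>carrier B. imp a (top B) = top B) \<and>
     (\<forall>a\<in>carrier B. \<forall>b\<in>carrier B. \<forall>c\<in>carrier B.
        meet B (imp a b) (imp a c) = imp a (meet B b c)) \<and>
     (\<forall>a\<in>carrier B. \<forall>b\<in>carrier B. \<forall>c\<in>carrier B.
        ble B (imp (join B a b) c) (meet B (imp a c) (imp b c)))"

definition ultrafilter :: "'a balg \<Rightarrow> 'a set \<Rightarrow> bool" where
  "ultrafilter B u \<longleftrightarrow>
     u \<subseteq> carrier B \<and> top B \<in> u \<and> bot B \<notin> u \<and>
     (\<forall>a\<in>u. \<forall>b\<in>u. meet B a b \<in> u) \<and>
     (\<forall>a\<in>u. \<forall>b\<in>carrier B. ble B a b \<longrightarrow> b \<in> u) \<and>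
     (\<forall>a\<in>carrier B. a \<in> u \<or> cmpl B a \<in> u)"

definition Ul :: "'a balg \<Rightarrow> 'a set set" where
  "Ul B = {u. ultrafilter B u}"

definition phi :: "'a balg \<Rightarrow> 'a \<Rightarrow> 'a set set" where
  "phi B a = {u \<in> Ul B. a \<in> u}"

definition stone_open :: "'a balg \<Rightarrow> 'a set set \<Rightarrow> bool" where
  "stone_open B W \<longleftrightarrow> W \<subseteq> Ul B \<and> (\<forall>u\<in>W. \<exists>a\<in>carrier B. u \<in> phi B a \<and> phi B a \<subseteq> W)"

definition stone_closed :: "'a balg \<Rightarrow> 'a set set \<Rightarrow> bool" where
  "stone_closed B Y \<longleftrightarrow> Y \<subseteq> Ul B \<and> stone_open B (Ul B - Y)"

definition pi_ext :: "'a balg \<Rightarrow> ('a \<Rightarrow> 'a \<Rightarrow> 'a) \<Rightarrow> 'a set set \<Rightarrow> 'a set set \<Rightarrow> 'a set set" where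
  "pi_ext B imp U V =
     (\<Inter>{\<Union>{phi B (imp a b) | a b. a \<in> carrier B \<and> b \<in> carrier B \<and> Y \<subseteq> phi B a \<and> phi B b \<subseteq> W}
        | Y W. stone_closed B Y \<and> Y \<subseteq> U \<and> stone_open B W \<and> V \<subseteq> W})"

definition sigma_ext :: "'a balg \<Rightarrow> ('a \<Rightarrow> 'a \<Rightarrow> 'a) \<Rightarrow> 'a set set \<Rightarrow> 'a set set \<Rightarrow> 'a set set" where
  "sigma_ext B imp U V =
     (\<Union>{\<Inter>{phi B (imp a b) | a b. a \<in> carrier B \<and> b \<in> carrier B \<and> phi B a \<subseteq> W \<and> Y \<subseteq> phi B b}
        | W Y. stone_open B W \<and> U \<subseteq> W \<and> stone_closed B Y \<and> Y \<subseteq> V})"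

end

theory Submission
  imports Defs
begin

text \<open>
  Take the finite-cofinite algebra of sets of naturals with the conditional
  \<open>a \<rightarrow> b = 1\<close> if \<open>a \<le> b\<close> and \<open>0\<close> otherwise, and let \<open>U = V = {u}\<close> for the
  non-principal ultrafilter \<open>u\<close> of cofinite sets. Given closed \<open>Y \<subseteq> U\<close> and
  open \<open>O \<supseteq> V\<close>, a basic \<open>\<phi>(c)\<close> with \<open>u \<in> \<phi>(c) \<subseteq> O\<close> serves as both antecedent and
  consequent, and \<open>c \<rightarrow> c = 1\<close>, so \<open>u \<in> U \<rightarrow>\<^sup>\<pi> V\<close>. For \<open>U \<rightarrow>\<^sup>\<sigma> V\<close>, any basic \<open>\<phi>(c) \<subseteq> O\<close> around \<open>u\<close>
  can be paired with \<open>b = c - {n}\<close> for some \<open>n \<in> c\<close>: still \<open>Y \<subseteq> {u} \<subseteq> \<phi>(b)\<close>, but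
  \<open>c \<rightarrow> b = 0\<close>, so every intersection defining \<open>U \<rightarrow>\<^sup>\<sigma> V\<close> is empty.
\<close>

lemma ultrafilter_bot_notin: "u \<in> Ul B \<Longrightarrow> bot B \<notin> u"
  by (simp add: Ul_def ultrafilter_def)

lemma stone_open_basic_nbhd:
  assumes "stone_open B W" "u \<in> W"
  obtains c where "c \<in> carrier B" "c \<in> u" "phi B c \<subseteq> W"
  using assms unfolding stone_open_def phi_def by blast

lemma pi_ext_memI:
  assumes "\<And>Y W. stone_closed B Y \<Longrightarrow> Y \<subseteq> U \<Longrightarrow> stone_open B W \<Longrightarrow> V \<subseteq> W \<Longrightarrow>
             \<exists>a\<in>carrier B. \<exists>b\<in>carrier B. Y \<subseteq> phi B a \<and> phi B b \<subseteq> W \<and> v \<in> phi B (imp a b)"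
  shows "v \<in> pi_ext B imp U V"
  unfolding pi_ext_def
proof (intro InterI, elim CollectE exE conjE)
  fix S Y W
  assume S: "S = \<Union>{phi B (imp a b) | a b. a \<in> carrier B \<and> b \<in> carrier B \<and> Y \<subseteq> phi B a \<and> phi B b \<subseteq> W}"
    and "stone_closed B Y" "Y \<subseteq> U" "stone_open B W" "V \<subseteq> W"
  then obtain a b where "a \<in> carrier B" "b \<in> carrier B" "Y \<subseteq> phi B a" "phi B b \<subseteq> W"
    and "v \<in> phi B (imp a b)"
    using assms by blast
  then show "v \<in> S"
    unfolding S by (intro UnionI[of "phi B (imp a b)"]) auto
qed

lemma sigma_ext_memE:
  assumes "v \<in> sigma_ext B imp U V"
  obtains W Y where "stone_open B W" "U \<subseteq> W" "stone_closed B Y" "Y \<subseteq> V"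
    and "\<And>a b. a \<in> carrier B \<Longrightarrow> b \<in> carrier B \<Longrightarrow> phi B a \<subseteq> W \<Longrightarrow> Y \<subseteq> phi B b
           \<Longrightarrow> v \<in> phi B (imp a b)"
proof -
  from assms obtain W Y where "stone_open B W" "U \<subseteq> W" "stone_closed B Y" "Y \<subseteq> V"
    and "v \<in> \<Inter>{phi B (imp a b) | a b. a \<in> carrier B \<and> b \<in> carrier B \<and> phi B a \<subseteq> W \<and> Y \<subseteq> phi B b}"
    unfolding sigma_ext_def by (elim UnionE CollectE exE conjE) simp
  then show thesis
    by (intro that[of W Y]) blast+
qed

lemma pi_ext_singleton_memI:
  assumes "u \<in> Ul B" and refl: "\<And>c. c \<in> carrier B \<Longrightarrow> c \<in> u \<Longrightarrow> imp c c \<in> u"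
  shows "u \<in> pi_ext B imp {u} {u}"
proof (rule pi_ext_memI)
  fix Y W assume "Y \<subseteq> {u}" "stone_open B W" "{u} \<subseteq> W"
  then obtain c where c: "c \<in> carrier B" "c \<in> u" "phi B c \<subseteq> W"
    by (meson insert_subset stone_open_basic_nbhd)
  moreover from c \<open>Y \<subseteq> {u}\<close> \<open>u \<in> Ul B\<close> have "Y \<subseteq> phi B c" "u \<in> phi B (imp c c)"
    by (auto simp: phi_def refl)
  ultimately show "\<exists>a\<in>carrier B. \<exists>b\<in>carrier B. Y \<subseteq> phi B a \<and> phi B b \<subseteq> W \<and> u \<in> phi B (imp a b)"
    by blast
qed

lemma sigma_ext_singleton_eq_empty:
  assumes "u \<in> Ul B"
    and imp_bot: "\<And>c. c \<in> carrier B \<Longrightarrow> c \<in> u \<Longrightarrow> \<exists>b\<in>carrier B. b \<in> u \<and> imp c b = bot B"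
  shows "sigma_ext B imp {u} {u} = {}"
proof (rule equals0I)
  fix v assume "v \<in> sigma_ext B imp {u} {u}"
  then obtain W Y where "stone_open B W" "{u} \<subseteq> W" "stone_closed B Y" "Y \<subseteq> {u}"
    and v: "\<And>a b. a \<in> carrier B \<Longrightarrow> b \<in> carrier B \<Longrightarrow> phi B a \<subseteq> W \<Longrightarrow> Y \<subseteq> phi B b
              \<Longrightarrow> v \<in> phi B (imp a b)"
    by (rule sigma_ext_memE) blast
  then obtain c where c: "c \<in> carrier B" "c \<in> u" "phi B c \<subseteq> W"
    by (meson insert_subset stone_open_basic_nbhd)
  then obtain b where b: "b \<in> carrier B" "b \<in> u" "imp c b = bot B"
    using imp_bot by blast
  with \<open>Y \<subseteq> {u}\<close> \<open>u \<in> Ul B\<close> have "Y \<subseteq> phi B b"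
    by (auto simp: phi_def)
  then have "v \<in> phi B (bot B)"
    using v[OF c(1) b(1) c(3)] b(3) by simp
  then show False
    by (auto simp: phi_def dest: ultrafilter_bot_notin)
qed

definition finite_cofinite_algebra :: "'a set balg" where
  "finite_cofinite_algebra = \<lparr>carrier = {a. finite a \<or> finite (- a)}, meet = (\<inter>), join = (\<union>),
     cmpl = uminus, bot = {}, top = UNIV\<rparr>"

definition subset_imp :: "'a set \<Rightarrow> 'a set \<Rightarrow> 'a set" where
  "subset_imp a b = (if a \<subseteq> b then UNIV else {})"

definition cofinite_ultrafilter :: "'a set set" where
  "cofinite_ultrafilter = {a. finite (- a)}"

lemma finite_cofinite_algebra_simps [simp]:
  "carrier finite_cofinite_algebra = {a. finite a \<or> finite (- a)}"
  "meet finite_cofinite_algebra = (\<inter>)" "join finite_cofinite_algebra = (\<union>)"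
  "cmpl finite_cofinite_algebra = uminus"
  "bot finite_cofinite_algebra = {}" "top finite_cofinite_algebra = UNIV"
  by (simp_all add: finite_cofinite_algebra_def)

lemma boolean_algebra_finite_cofinite: "boolean_algebra finite_cofinite_algebra"
  unfolding boolean_algebra_def finite_cofinite_algebra_simps
  by (intro conjI ballI) (auto simp: Compl_Int Compl_Un)

lemma conditional_algebra_subset_imp:
  "conditional_algebra finite_cofinite_algebra subset_imp"
  unfolding conditional_algebra_def
  by (simp add: boolean_algebra_finite_cofinite subset_imp_def ble_def)

lemma cofinite_ultrafilter_in_Ul:
  assumes "infinite (UNIV :: 'a set)"
  shows "(cofinite_ultrafilter :: 'a set set) \<in> Ul finite_cofinite_algebra"
proof -
  have "\<not> (finite a \<and> finite (- a))" for a :: "'a set"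
    using assms by (metis Compl_partition finite_UnI)
  then show ?thesis
    unfolding Ul_def ultrafilter_def cofinite_ultrafilter_def ble_def
    using assms by (auto simp: Compl_Int inf.absorb_iff1[symmetric] dest: finite_subset)
qed

lemma cofinite_ultrafilter_in_pi_ext:
  assumes "infinite (UNIV :: 'a set)"
  shows "(cofinite_ultrafilter :: 'a set set) \<in>
           pi_ext finite_cofinite_algebra subset_imp {cofinite_ultrafilter} {cofinite_ultrafilter}"
  using assms
  by (intro pi_ext_singleton_memI cofinite_ultrafilter_in_Ul)
     (simp_all add: subset_imp_def cofinite_ultrafilter_def)

lemma sigma_ext_cofinite_ultrafilter_eq_empty:
  assumes "infinite (UNIV :: 'a set)"
  shows "sigma_ext finite_cofinite_algebra subset_imp
           {cofinite_ultrafilter :: 'a set set} {cofinite_ultrafilter} = {}"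
proof (rule sigma_ext_singleton_eq_empty)
  show "cofinite_ultrafilter \<in> Ul (finite_cofinite_algebra :: 'a set balg)"
    using assms by (rule cofinite_ultrafilter_in_Ul)
next
  fix c :: "'a set" assume "c \<in> cofinite_ultrafilter"
  then have "finite (- c)" by (simp add: cofinite_ultrafilter_def)
  with assms obtain n where "n \<in> c"
    by (metis Compl_empty_eq ex_in_conv)
  with \<open>finite (- c)\<close> have "c - {n} \<in> cofinite_ultrafilter" "\<not> c \<subseteq> c - {n}"
    by (auto simp: cofinite_ultrafilter_def)
  then show "\<exists>b\<in>carrier finite_cofinite_algebra. b \<in> cofinite_ultrafilter \<and>
               subset_imp c b = bot finite_cofinite_algebra"
    by (intro bexI[of _ "c - {n}"]) (auto simp: cofinite_ultrafilter_def subset_imp_def)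
qed

theorem theorem2p17:
  shows "\<exists>(B :: nat set balg) imp U V.
           conditional_algebra B imp \<and> U \<subseteq> Ul B \<and> V \<subseteq> Ul B \<and>
           sigma_ext B imp U V \<noteq> pi_ext B imp U V"
proof -
  let ?u = "cofinite_ultrafilter :: nat set set"
  have "?u \<in> Ul finite_cofinite_algebra"
    by (simp add: cofinite_ultrafilter_in_Ul)
  moreover have "?u \<in> pi_ext finite_cofinite_algebra subset_imp {?u} {?u}"
    by (simp add: cofinite_ultrafilter_in_pi_ext)
  moreover have "sigma_ext finite_cofinite_algebra subset_imp {?u} {?u} = {}"
    by (simp add: sigma_ext_cofinite_ultrafilter_eq_empty)
  ultimately show ?thesis
    using conditional_algebra_subset_imp by blast
qed

end
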